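(* Let $G$ be a non-abelian subgroup of $\mathcal{H}(n,\mathbb{C})$ with $\Lambda_G\not\subset\mathbb{R}$ and $G\not\subset\mathcal{SR}_n$, and let $U=\mathbb{C}^n\setminus E_G$. The following are equivalent: (1) $G$ has a dense orbit in $\mathbb{C}^n$; (2) every orbit $G(z)$ with $z\in U$ is dense in $\mathbb{C}^n$; (3) either $E_G=\mathbb{C}^n$, or $\dim_{\mathbb{C}}E_G=n-1$ and $\overline{\Lambda_G}=\mathbb{C}$.
   Context: $\mathcal{H}(n,\mathbb{C})$ is the group of all maps $z\mapsto\lambda z+b$ of $\mathbb{C}^n$ with $\lambda\in\mathbb{C}^*$, $b\in\mathbb{C}^n$ ($\lambda$ = ratio); $\mathcal{T}_n$ = translations; every element of $\mathcal{H}(n,\mathbb{C})\setminus\mathcal{T}_n$ has a unique fixed point, its center. $H_2=(\frac{\pi}{2}+\pi\mathbb{Z})\cup\pi\mathbb{Z}$, $F_2=\{e^{ix}:x\in H_2\}$, $H_3=(\frac{\pi}{3}+\pi\mathbb{Z})\cup(-\frac{\pi}{3}+\pi\mathbb{Z})\cup\pi\mathbb{Z}$, $F_3=\{e^{ix}:x\in H_3\}$; $\mathcal{S}_i\mathcal{R}_n=\{z\mapsto\lambda z+b:\lambda\in F_i, b\in\mathbb{C}^n\}$, $\mathcal{SR}_n=\mathcal{S}_2\mathcal{R}_n\cup\mathcal{S}_3\mathcal{R}_n$. For a subgroup $G$: $G(z)$ is the orbit; $\Lambda_G$ the set of ratios of elements of $G$, $\overline{\Lambda_G}$ its closure in $\mathbb{C}$;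 $\Gamma_G$ the set of centers of elements of $G\setminus\mathcal{T}_n$; $E_G$ the smallest complex affine subspace of $\mathbb{C}^n$ containing $\Gamma_G$. *)

theory Defs
  imports "HOL-Analysis.Analysis"
begin

text \<open>Complex n-space is modelled as complex ^ 'n (n = CARD('n)); complex scalar
  multiplication is (*s).  An element of H(n,C) is a map z |-> lambda z + b.\<close>

definition cplx_homothety :: "complex \<Rightarrow> complex ^ 'n \<Rightarrow> (complex ^ 'n \<Rightarrow> complex ^ 'n)" where
  "cplx_homothety l b = (\<lambda>z. l *s z + b)"

definition Hn :: "(complex ^ 'n \<Rightarrow> complex ^ 'n) set" where
  "Hn = {f. \<exists>l b. l \<noteq> 0 \<and> f = cplx_homothety l b}"

definition Tn :: "(complex ^ 'n \<Rightarrow> complex ^ 'n) set" where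
  "Tn = {f. \<exists>b. f = cplx_homothety 1 b}"

definition subgroup_Hn :: "(complex ^ 'n \<Rightarrow> complex ^ 'n) set \<Rightarrow> bool" where
  "subgroup_Hn G \<longleftrightarrow> G \<subseteq> Hn \<and> id \<in> G \<and> (\<forall>f\<in>G. \<forall>g\<in>G. f \<circ> g \<in> G) \<and> (\<forall>f\<in>G. inv f \<in> G)"

definition ratio :: "(complex ^ 'n \<Rightarrow> complex ^ 'n) \<Rightarrow> complex" where
  "ratio f = (THE l. \<exists>b. f = cplx_homothety l b)"

definition center :: "(complex ^ 'n \<Rightarrow> complex ^ 'n) \<Rightarrow> complex ^ 'n" where
  "center f = (THE z. f z = z)"

definition orbit :: "(complex ^ 'n \<Rightarrow> complex ^ 'n) set \<Rightarrow> complex ^ 'n \<Rightarrow> (complex ^ 'n) set" where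
  "orbit G z = (\<lambda>f. f z) ` G"

definition Lambda :: "(complex ^ 'n \<Rightarrow> complex ^ 'n) set \<Rightarrow> complex set" where
  "Lambda G = ratio ` G"

definition Gamma :: "(complex ^ 'n \<Rightarrow> complex ^ 'n) set \<Rightarrow> (complex ^ 'n) set" where
  "Gamma G = center ` (G - Tn)"

definition cplx_affine :: "(complex ^ 'n) set \<Rightarrow> bool" where
  "cplx_affine S \<longleftrightarrow> (\<forall>x\<in>S. \<forall>y\<in>S. \<forall>t::complex. (1 - t) *s x + t *s y \<in> S)"

definition cplx_affine_hull :: "(complex ^ 'n) set \<Rightarrow> (complex ^ 'n) set" where
  "cplx_affine_hull A = \<Inter>{S. cplx_affine S \<and> A \<subseteq> S}"

definition E_G :: "(complex ^ 'n \<Rightarrow> complex ^ 'n) set \<Rightarrow> (complex ^ 'n) set" where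
  "E_G G = cplx_affine_hull (Gamma G)"

definition cplx_affine_dim :: "(complex ^ 'n) set \<Rightarrow> nat" where
  "cplx_affine_dim S = vec.dim {x - y | x y. x \<in> S \<and> y \<in> S}"

definition H2 :: "real set" where
  "H2 = {pi/2 + pi * of_int k | k. True} \<union> {pi * of_int k | k. True}"
definition F2 :: "complex set" where
  "F2 = {cis x | x. x \<in> H2}"
definition H3 :: "real set" where
  "H3 = {pi/3 + pi * of_int k | k. True} \<union> {- pi/3 + pi * of_int k | k. True}
        \<union> {pi * of_int k | k. True}"
definition F3 :: "complex set" where
  "F3 = {cis x | x. x \<in> H3}"

definition S2Rn :: "(complex ^ 'n \<Rightarrow> complex ^ 'n) set" where
  "S2Rn = {cplx_homothety l b | l b. l \<in> F2}"
definition S3Rn :: "(complex ^ 'n \<Rightarrow> complex ^ 'n) set" where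
  "S3Rn = {cplx_homothety l b | l b. l \<in> F3}"
definition SRn :: "(complex ^ 'n \<Rightarrow> complex ^ 'n) set" where
  "SRn = S2Rn \<union> S3Rn"

end

theory Submission
  imports Defs
begin

text \<open>
  Let T be the set of translation vectors of G and D the direction space of
  E_G, the affine hull of the centres.  Conjugating a translation by an element of ratio l
  multiplies its vector by l, so the ring of scalars preserving the closed group closure T
  contains Lambda_G.  A closed subring of C containing a non-real number and a unit outside
  F2 \<union> F3 is all of C; hence closure T is a complex subspace.  The commutator of two
  homotheties is a translation by a nonzero multiple of the difference of their centres,
  which yields closure T = D.  Writing g z = c + ratio g (z - c) + (g c - c) with c a centre
  and g c - c \<in> D, the closure of the orbit of z contains z + D and the orbit lies in
  c + span (z - c, D).  From this: E_G = UNIV gives dense orbits; a hyperplane E_G with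
  dense ratios gives dense orbits off E_G; and a dense orbit with E_G \<noteq> UNIV forces the
  hyperplane case, the ratios being the values of a functional that is 1 on z - c, 0 on D.
\<close>

subsection \<open>Homotheties of complex n-space\<close>

lemma hom_apply [simp]: "cplx_homothety l b z = l *s z + b"
  by (simp add: cplx_homothety_def)

lemma hom_comp: "cplx_homothety l b \<circ> cplx_homothety m c = cplx_homothety (l * m) (l *s c + b)"
  by (rule ext) (simp add: vec_eq_iff algebra_simps)

lemma hom_inj:
  assumes "cplx_homothety l b = (cplx_homothety m c :: complex^'n \<Rightarrow> complex^'n)"
  shows "l = m \<and> b = c"
proof -
  have b: "b = c" using fun_cong[OF assms, of 0] by simp
  have "(l *s vec 1 + b) $ (undefined::'n) = (m *s vec 1 + b) $ undefined"
    using fun_cong[OF assms, of "vec 1"] b by simp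
  then show ?thesis using b by simp
qed

lemma ratio_hom [simp]: "ratio (cplx_homothety l b) = l"
  unfolding ratio_def by (rule the_equality) (auto dest: hom_inj)

lemma inv_hom:
  assumes "l \<noteq> 0"
  shows "inv (cplx_homothety l b) = cplx_homothety (inverse l) (- (inverse l *s b))"
  by (rule inv_unique_comp) (use assms in \<open>auto simp: hom_comp vec_eq_iff field_simps intro!: ext\<close>)

lemma Tn_hom: "cplx_homothety l b \<in> Tn \<longleftrightarrow> l = 1"
  unfolding Tn_def by (auto dest: hom_inj)

lemma center_hom_centered:
  assumes "l \<noteq> 1"
  shows "center (cplx_homothety l ((1 - l) *s a)) = a"
  unfolding center_def
proof (rule the_equality)
  show "cplx_homothety l ((1 - l) *s a) a = a" by (simp add: vec_eq_iff algebra_simps)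
next
  fix z assume "cplx_homothety l ((1 - l) *s a) z = z"
  then have "(1 - l) * z $ i = (1 - l) * a $ i" for i
    by (simp add: vec_eq_iff algebra_simps)
  then show "z = a" using assms by (simp add: vec_eq_iff)
qed

lemma hom_centered_form:
  assumes "l \<noteq> 1"
  shows "cplx_homothety l b = cplx_homothety l ((1 - l) *s ((1 / (1 - l)) *s b))"
  using assms by (simp add: vector_smult_assoc)

subsection \<open>Linear algebra in complex n-space\<close>

lemma tendsto_smult_vec:
  fixes g :: "_ \<Rightarrow> complex^'n"
  assumes "(f \<longlongrightarrow> a) F" "(g \<longlongrightarrow> x) F"
  shows "((\<lambda>t. f t *s g t) \<longlongrightarrow> a *s x) F"
  by (rule vec_tendstoI) (simp add: tendsto_mult assms tendsto_vec_nth)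

lemma continuous_smult_vec: "continuous_on S (\<lambda>x::complex^'n. a *s x)"
  unfolding continuous_on_def
  by (intro ballI tendsto_smult_vec tendsto_const tendsto_ident_at)

lemma continuous_smult_vec_left: "continuous_on S (\<lambda>k::complex. k *s (w::complex^'n))"
  unfolding continuous_on_def
  by (intro ballI tendsto_smult_vec tendsto_const tendsto_ident_at)

lemma sep_functional:
  fixes S :: "(complex^'n) set"
  assumes "vec.subspace S" "u \<notin> S"
  shows "\<exists>\<phi>. continuous_on UNIV \<phi> \<and> (\<forall>x\<in>S. \<phi> x = 0) \<and> \<phi> u = 1
      \<and> (\<forall>a x. \<phi> (a *s x) = a * \<phi> x) \<and> (\<forall>x y. \<phi> (x + y) = \<phi> x + \<phi> y)"
proof -
  obtain B where B: "B \<subseteq> S" "vec.independent B" "S \<subseteq> vec.span B"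
    by (meson vec.basis_exists)
  have "vec.span B \<subseteq> S" by (rule vec.span_minimal[OF B(1) assms(1)])
  then have uB: "u \<notin> vec.span B" using assms(2) by auto
  have ind: "vec.independent (insert u B)"
    using B uB by (simp add: vec.independent_insert)
  define f where "f = vec.construct (insert u B) (\<lambda>b. if b = u then (vec 1 :: complex^'n) else 0)"
  have lin: "Vector_Spaces.linear (*s) (*s) f" unfolding f_def using vec.linear_construct[OF ind] .
  have fu: "f u = vec 1" unfolding f_def by (subst vec.construct_basis[OF ind]) auto
  have fB: "f b = 0" if "b \<in> B" for b
    using that uB vec.span_base[OF that] unfolding f_def
    by (subst vec.construct_basis[OF ind]) auto
  have fS: "f x = 0" if "x \<in> S" for x
    by (rule vec.linear_eq_0_on_span[OF lin fB]) (use B(3) that in auto)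
  define \<phi> where "\<phi> x = f x $ (undefined::'n)" for x
  have rep: "\<phi> x = (\<Sum>i\<in>UNIV. x$i * (f (axis i 1) $ undefined))" for x
    unfolding \<phi>_def by (rule linear_componentwise[OF lin])
  have "continuous_on UNIV \<phi>"
  proof -
    have c: "continuous_on UNIV (\<lambda>x::complex^'n. x $ i)" for i
      by (rule linear_continuous_on) (rule bounded_linear_vec_nth)
    show ?thesis unfolding rep
      by (intro continuous_on_sum continuous_on_mult_right c)
  qed
  moreover have "\<forall>x\<in>S. \<phi> x = 0" using fS by (simp add: \<phi>_def)
  moreover have "\<phi> u = 1" by (simp add: \<phi>_def fu)
  moreover have "\<forall>a x. \<phi> (a *s x) = a * \<phi> x"
    using vec.linear_scale[OF lin] by (simp add: \<phi>_def)
  moreover have "\<forall>x y. \<phi> (x + y) = \<phi> x + \<phi> y"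
    using vec.linear_add[OF lin] by (simp add: \<phi>_def)
  ultimately show ?thesis by (intro exI[of _ \<phi>]) simp
qed

text \<open>Complex subspaces are closed: a limit point outside would be separated by a
  continuous functional vanishing on the subspace.\<close>
lemma vec_subspace_closed:
  fixes S :: "(complex^'n) set"
  assumes "vec.subspace S"
  shows "closed S"
proof -
  have "u \<in> S" if u: "u \<in> closure S" for u
  proof (rule ccontr)
    assume "u \<notin> S"
    then obtain \<phi> :: "complex^'n \<Rightarrow> complex"
      where \<phi>: "continuous_on UNIV \<phi>" "\<forall>x\<in>S. \<phi> x = 0" "\<phi> u = 1"
      using sep_functional[OF assms] by blast
    have "closed {x. \<phi> x = 0}" by (rule closed_Collect_eq[OF \<phi>(1) continuous_on_const])
    moreover have "S \<subseteq> {x. \<phi> x = 0}" using \<phi>(2) by blast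
    ultimately have "closure S \<subseteq> {x. \<phi> x = 0}" by (rule closure_minimal[rotated])
    then show False using u \<phi>(3) by auto
  qed
  then show ?thesis using closure_subset_eq by blast
qed

lemma span_insert_eq_UNIV_iff:
  fixes D :: "(complex^'n) set"
  assumes "vec.subspace D" "w \<notin> D"
  shows "vec.span (insert w D) = UNIV \<longleftrightarrow> vec.dim D = CARD('n) - 1"
proof -
  have "vec.span D = D" using assms(1) vec.span_eq_iff by blast
  then have "vec.dim (insert w D) = vec.dim D + 1"
    using vec.dim_insert[of w D] assms(2) by presburger
  moreover have "vec.span (insert w D) = UNIV \<longleftrightarrow> vec.dim (insert w D) = CARD('n)"
    using vec.dim_eq_full[of "insert w D"] by (simp add: vec.dimension_def card_cart_basis)
  ultimately show ?thesis by auto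
qed

subsection \<open>Complex affine subspaces\<close>

definition affine_direction :: "(complex^'n) set \<Rightarrow> (complex^'n) set" where
  "affine_direction S = {x - y | x y. x \<in> S \<and> y \<in> S}"

lemma cplx_affine_dim_direction: "cplx_affine_dim S = vec.dim (affine_direction S)"
  unfolding cplx_affine_dim_def affine_direction_def ..

lemma affine_add_diff:
  assumes "cplx_affine E" "x \<in> E" "y \<in> E" "z \<in> E"
  shows "x + y - z \<in> E"
proof -
  have m: "(1 - 1/2) *s x + (1/2) *s y \<in> E" using assms unfolding cplx_affine_def by blast
  have "(1 - 2) *s z + 2 *s ((1 - 1/2) *s x + (1/2) *s y) \<in> E"
    using assms(1,4) m unfolding cplx_affine_def by blast
  moreover have "(1 - 2) *s z + 2 *s ((1 - 1/2) *s x + (1/2) *s y) = x + y - z"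
    by (simp add: vec_eq_iff algebra_simps)
  ultimately show ?thesis by simp
qed

lemma hull_affine: "cplx_affine (cplx_affine_hull A)"
  unfolding cplx_affine_hull_def cplx_affine_def by blast

lemma hull_subset: "A \<subseteq> cplx_affine_hull A"
  unfolding cplx_affine_hull_def by blast

lemma hull_minimal: "cplx_affine S \<Longrightarrow> A \<subseteq> S \<Longrightarrow> cplx_affine_hull A \<subseteq> S"
  unfolding cplx_affine_hull_def by blast

lemma affine_direction_iff:
  assumes "cplx_affine E" "c \<in> E"
  shows "v \<in> affine_direction E \<longleftrightarrow> c + v \<in> E"
proof
  assume "v \<in> affine_direction E"
  then obtain x y where "v = x - y" "x \<in> E" "y \<in> E" unfolding affine_direction_def by blast
  then show "c + v \<in> E" using affine_add_diff[OF assms(1) \<open>c \<in> E\<close> \<open>x \<in> E\<close> \<open>y \<in> E\<close>]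
    by (simp add: add_diff_eq)
next
  assume "c + v \<in> E"
  then show "v \<in> affine_direction E" using assms(2) unfolding affine_direction_def
    by (intro CollectI exI[of _ "c + v"] exI[of _ c]) simp
qed

lemma affine_direction_subspace:
  assumes "cplx_affine E" "c \<in> E"
  shows "vec.subspace (affine_direction E)"
  unfolding vec.subspace_def
proof (intro conjI ballI allI)
  note dir = affine_direction_iff[OF assms]
  show "0 \<in> affine_direction E" using dir assms(2) by simp
  fix v w assume "v \<in> affine_direction E" "w \<in> affine_direction E"
  then have "(c + v) + (c + w) - c \<in> E" using affine_add_diff[OF assms(1)] dir assms(2) by blast
  then show "v + w \<in> affine_direction E" using dir by (simp add: algebra_simps)
next
  note dir = affine_direction_iff[OF assms]
  fix a :: complex and v assume "v \<in> affine_direction E"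
  then have "(1 - a) *s c + a *s (c + v) \<in> E" using assms dir unfolding cplx_affine_def by blast
  moreover have "(1 - a) *s c + a *s (c + v) = c + a *s v" by (simp add: vec_eq_iff algebra_simps)
  ultimately show "a *s v \<in> affine_direction E" using dir by simp
qed

lemma closure_add_closed:
  fixes T :: "'a::real_normed_vector set"
  assumes "\<And>x y. x \<in> T \<Longrightarrow> y \<in> T \<Longrightarrow> x + y \<in> T" "x \<in> closure T" "y \<in> closure T"
  shows "x + y \<in> closure T"
proof -
  obtain f where f: "\<forall>n. f n \<in> T" "f \<longlonglongrightarrow> x" using assms(2) unfolding closure_sequential by blast
  obtain g where g: "\<forall>n. g n \<in> T" "g \<longlonglongrightarrow> y" using assms(3) unfolding closure_sequential by blast
  have "\<forall>n. f n + g n \<in> T" using f(1) g(1) assms(1) by simp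
  moreover have "(\<lambda>n. f n + g n) \<longlonglongrightarrow> x + y" using f(2) g(2) by (rule tendsto_add)
  ultimately show ?thesis unfolding closure_sequential by (intro exI[of _ "\<lambda>n. f n + g n"] conjI)
qed

lemma closure_map_closed:
  assumes "continuous_on UNIV h" "\<And>x. x \<in> T \<Longrightarrow> h x \<in> T" "x \<in> closure T"
  shows "h x \<in> closure T"
proof -
  have "h ` closure T \<subseteq> closure T"
    by (rule image_closure_subset) (use assms(1,2) closure_subset in \<open>auto intro: continuous_on_subset\<close>)
  then show ?thesis using assms(3) by blast
qed


subsection \<open>Closed subrings of the complex numbers\<close>

definition complex_subring :: "complex set \<Rightarrow> bool" where
  "complex_subring M \<longleftrightarrow> 1 \<in> M \<and> (\<forall>x\<in>M. - x \<in> M)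
     \<and> (\<forall>x\<in>M. \<forall>y\<in>M. x + y \<in> M \<and> x * y \<in> M)"

lemma subring_of_int:
  assumes "complex_subring M"
  shows "of_int k \<in> M"
proof -
  have one: "1 \<in> M" and add: "\<And>x y. x \<in> M \<Longrightarrow> y \<in> M \<Longrightarrow> x + y \<in> M"
    and neg: "\<And>x. x \<in> M \<Longrightarrow> - x \<in> M"
    using assms unfolding complex_subring_def by blast+
  have zero: "0 \<in> M" using add[OF one neg[OF one]] by simp
  have nat: "of_nat j \<in> M" for j by (induction j) (auto simp: zero add one)
  show ?thesis
  proof (cases "k \<ge> 0")
    case True then show ?thesis using nat[of "nat k"] by simp
  next
    case False then show ?thesis using neg[OF nat[of "nat (- k)"]] by simp
  qed
qed

lemma subring_power:
  assumes "complex_subring M" "x \<in> M"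
  shows "x ^ k \<in> M"
  using assms by (induction k) (auto simp: complex_subring_def)

lemma unit_classify:
  fixes l :: complex
  assumes "cmod l = 1" "2 * Re l \<in> \<int>"
  shows "l \<in> F2 \<or> l \<in> F3"
proof -
  have F2I: "cis (pi/2 + pi * of_int k) \<in> F2" "cis (pi * of_int k) \<in> F2" for k
    unfolding F2_def H2_def by blast+
  have F3I: "cis (pi/3 + pi * of_int k) \<in> F3" "cis (- pi/3 + pi * of_int k) \<in> F3" for k
    unfolding F3_def H3_def by blast+
  obtain m where m: "2 * Re l = of_int m" using assms(2) Ints_cases by metis
  have n: "Re l ^ 2 + Im l ^ 2 = 1"
    using assms(1) by (metis cmod_power2 norm_one power_one)
  have "\<bar>Re l\<bar> \<le> 1" using abs_Re_le_cmod[of l] assms(1) by simp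
  then have "m \<in> {-2, -1, 0, 1, 2}" using m by auto
  then consider "m = -2" | "m = -1" | "m = 0" | "m = 1" | "m = 2" by blast
  then show ?thesis
  proof cases
    case 1
    then have "l = cis (pi * of_int 1)" using m n by (auto simp: complex_eq_iff power2_eq_square)
    then show ?thesis using F2I by blast
  next
    case 5
    then have "l = cis (pi * of_int 0)" using m n by (auto simp: complex_eq_iff power2_eq_square)
    then show ?thesis using F2I by blast
  next
    case 3
    then have "Re l = 0" "Im l ^ 2 = 1 ^ 2" using m n by auto
    then have "Re l = 0" "Im l = 1 \<or> Im l = -1" using power2_eq_iff by blast+
    then have "l = cis (pi/2 + pi * of_int 0) \<or> l = cis (pi/2 + pi * of_int (-1))"
      by (auto simp: complex_eq_iff cos_diff sin_diff)
    then show ?thesis using F2I by blast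
  next
    case 4
    then have r: "Re l = 1/2" using m by simp
    then have "Im l ^ 2 = (sqrt 3 / 2) ^ 2" using n[unfolded r] by (simp add: power_divide power2_eq_square)
    then have "Im l = sqrt 3 / 2 \<or> Im l = - (sqrt 3 / 2)" using power2_eq_iff by blast
    then have "l = cis (pi/3 + pi * of_int 0) \<or> l = cis (- pi/3 + pi * of_int 0)"
      using r by (auto simp: complex_eq_iff cos_60 sin_60)
    then show ?thesis using F3I by blast
  next
    case 2
    then have r: "Re l = -1/2" using m by simp
    then have "Im l ^ 2 = (sqrt 3 / 2) ^ 2" using n[unfolded r] by (simp add: power_divide power2_eq_square)
    then have "Im l = sqrt 3 / 2 \<or> Im l = - (sqrt 3 / 2)" using power2_eq_iff by blast
    then have "- l = cis (pi/3) \<or> - l = cis (- pi/3)"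
      using r by (auto simp: complex_eq_iff cos_60 sin_60)
    moreover have "cis (x + pi * of_int 1) = - cis x" "cis (x + pi * of_int (-1)) = - cis x" for x
      by (simp_all add: complex_eq_iff cos_add sin_add cos_diff sin_diff)
    ultimately have "l = cis (- pi/3 + pi * of_int 1) \<or> l = cis (pi/3 + pi * of_int (-1))"
      by (metis minus_minus)
    then show ?thesis using F3I by blast
  qed
qed

text \<open>If a subring contains arbitrarily small nonzero elements and a non-real element,
  it is dense: the lattice spanned by r and \<mu> r approximates every point.\<close>
lemma subring_small_elements_dense:
  assumes M: "complex_subring M" and mu: "\<mu> \<in> M" "Im \<mu> \<noteq> 0"
    and small: "\<forall>e>0. \<exists>r\<in>M. r \<noteq> 0 \<and> cmod r < e"
  shows "closure M = UNIV"
proof -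
  have add: "\<And>x y. x \<in> M \<Longrightarrow> y \<in> M \<Longrightarrow> x + y \<in> M"
    and mul: "\<And>x y. x \<in> M \<Longrightarrow> y \<in> M \<Longrightarrow> x * y \<in> M"
    using M unfolding complex_subring_def by blast+
  have "w \<in> closure M" for w
  proof (unfold closure_approachable, intro allI impI)
    fix e :: real assume e: "e > 0"
    have "e / (1 + cmod \<mu>) > 0" using e by (simp add: add_pos_nonneg)
    then obtain r where r: "r \<in> M" "r \<noteq> 0" "cmod r < e / (1 + cmod \<mu>)" using small by blast
    define b where "b = Im (w / r) / Im \<mu>"
    define a where "a = Re (w / r) - b * Re \<mu>"
    have qab: "w / r = of_real a + of_real b * \<mu>"
      using mu(2) by (simp add: complex_eq_iff a_def b_def)
    define y where "y = of_int \<lfloor>a\<rfloor> * r + of_int \<lfloor>b\<rfloor> * \<mu> * r"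
    have yM: "y \<in> M" unfolding y_def by (intro add mul subring_of_int[OF M] r mu)
    have "w - y = of_real (a - \<lfloor>a\<rfloor>) * r + of_real (b - \<lfloor>b\<rfloor>) * \<mu> * r"
      using r(2) qab unfolding y_def by (simp add: field_simps)
    then have "cmod (w - y) \<le> (a - \<lfloor>a\<rfloor>) * cmod r + (b - \<lfloor>b\<rfloor>) * cmod \<mu> * cmod r"
      by (metis (no_types, lifting) norm_triangle_ineq norm_mult norm_of_real
          abs_of_nonneg of_int_floor_le diff_ge_0_iff_ge)
    also have "\<dots> \<le> 1 * cmod r + 1 * cmod \<mu> * cmod r"
    proof -
      have "a - \<lfloor>a\<rfloor> \<le> 1" "b - \<lfloor>b\<rfloor> \<le> 1"
        using frac_lt_1[of a] frac_lt_1[of b] by (auto simp: frac_def)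
      then show ?thesis by (intro add_mono mult_right_mono mult_mono) auto
    qed
    also have "\<dots> = (1 + cmod \<mu>) * cmod r" by (simp add: algebra_simps)
    also have "\<dots> < e" using r(3) by (simp add: field_simps add_pos_nonneg)
    finally show "\<exists>y\<in>M. dist y w < e" using yM by (auto simp: dist_norm norm_minus_commute)
  qed
  then show ?thesis by blast
qed

text \<open>In a subring whose nonzero elements are bounded away from 0, a unit l has modulus 1
  (otherwise l or its inverse has small powers) and integral trace l + cnj l = l + 1/l.\<close>
lemma discrete_subring_unit:
  assumes M: "complex_subring M" and e: "e > 0" "\<And>r. r \<in> M \<Longrightarrow> r \<noteq> 0 \<Longrightarrow> e \<le> cmod r"
    and l: "l \<in> M" "inverse l \<in> M" "l \<noteq> 0"
  shows "l \<in> F2 \<or> l \<in> F3"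
proof -
  have no_small: "\<not> cmod x < 1" if "x \<in> M" "x \<noteq> 0" for x
  proof
    assume "cmod x < 1"
    then obtain k where "cmod x ^ k < e" using real_arch_pow_inv[OF e(1)] by blast
    moreover have "e \<le> cmod (x ^ k)" using e(2)[OF subring_power[OF M that(1)]] that(2) by simp
    ultimately show False by (simp add: norm_power)
  qed
  have "\<not> cmod l < 1" "\<not> inverse (cmod l) < 1"
    using no_small[of l] no_small[of "inverse l"] l by (auto simp: norm_inverse)
  then have nl: "cmod l = 1"
    by (metis inverse_less_1_iff linorder_neqE_linordered_idom)
  have "l * cnj l = 1" using nl by (simp add: complex_norm_square[symmetric])
  then have "inverse l = cnj l" by (rule inverse_unique)
  then have trace: "of_real (2 * Re l) \<in> M"
    using l M unfolding complex_subring_def by (metis complex_add_cnj)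
  define r where "r = 2 * Re l"
  have frac_in: "of_real (frac r) \<in> M"
    using trace subring_of_int[OF M, of "- \<lfloor>r\<rfloor>"] M unfolding complex_subring_def r_def frac_def
    by (metis of_int_minus of_real_diff of_real_of_int_eq uminus_add_conv_diff add.commute)
  have "frac r = 0"
  proof (rule ccontr)
    assume "frac r \<noteq> 0"
    moreover have "cmod (of_real (frac r)) < 1" using frac_lt_1[of r] frac_ge_0[of r] by simp
    ultimately show False using no_small[OF frac_in] by simp
  qed
  then have "2 * Re l \<in> \<int>" unfolding r_def by (simp add: frac_eq_0_iff)
  then show ?thesis using unit_classify nl by blast
qed

lemma closed_subring_eq_UNIV:
  assumes M: "complex_subring M" "closed M"
    and mu: "\<mu> \<in> M" "Im \<mu> \<noteq> 0"
    and l: "l \<in> M" "inverse l \<in> M" "l \<noteq> 0" "l \<notin> F2" "l \<notin> F3"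
  shows "M = UNIV"
proof (cases "\<forall>e>0. \<exists>r\<in>M. r \<noteq> 0 \<and> cmod r < e")
  case True
  then show ?thesis using subring_small_elements_dense[OF M(1) mu] M(2) closure_closed by metis
next
  case False
  then obtain e where "e > 0" "\<And>r. r \<in> M \<Longrightarrow> r \<noteq> 0 \<Longrightarrow> e \<le> cmod r"
    by (auto simp: not_less)
  then show ?thesis using discrete_subring_unit[OF M(1) _ _ l(1-3)] l(4,5) by blast
qed

lemma multiplier_ring:
  fixes C :: "(complex^'n) set"
  assumes "closed C" "\<And>x y. x \<in> C \<Longrightarrow> y \<in> C \<Longrightarrow> x + y \<in> C" "\<And>x. x \<in> C \<Longrightarrow> - x \<in> C"
  shows "complex_subring {\<mu>. \<forall>x\<in>C. \<mu> *s x \<in> C}" "closed {\<mu>. \<forall>x\<in>C. \<mu> *s x \<in> C}"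
proof -
  have "(x + y) *s v \<in> C" "(- x) *s v \<in> C" "(x * y) *s v \<in> C"
    if "\<forall>v\<in>C. x *s v \<in> C" "\<forall>v\<in>C. y *s v \<in> C" "v \<in> C" for x y :: complex and v
  proof -
    show "(x + y) *s v \<in> C" using that assms(2) by (simp only: vector_sadd_rdistrib)
    show "(- x) *s v \<in> C" using that assms(3) by (simp only: vector_smult_lneg)
    show "(x * y) *s v \<in> C" using that by (simp only: vector_smult_assoc[symmetric])
  qed
  then show "complex_subring {\<mu>. \<forall>x\<in>C. \<mu> *s x \<in> C}"
    unfolding complex_subring_def by auto
  have "{\<mu>. \<forall>x\<in>C. \<mu> *s x \<in> C} = (\<Inter>x\<in>C. (\<lambda>\<mu>. \<mu> *s x) -` C)" by auto
  moreover have "closed ((\<lambda>\<mu>. \<mu> *s x) -` C)" for x :: "complex^'n"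
    by (rule continuous_closed_vimage[OF assms(1)])
      (auto intro!: continuous_at_imp_continuous_on
        simp: continuous_def tendsto_smult_vec tendsto_ident_at intro: tendsto_const)
  ultimately show "closed {\<mu>. \<forall>x\<in>C. \<mu> *s x \<in> C}" by auto
qed

subsection \<open>Subgroups of H(n,C)\<close>

definition transl_part :: "(complex^'n \<Rightarrow> complex^'n) set \<Rightarrow> (complex^'n) set" where
  "transl_part G = {b. cplx_homothety 1 b \<in> G}"

locale Hn_subgroup =
  fixes G :: "(complex^'n \<Rightarrow> complex^'n) set"
  assumes subgroup: "subgroup_Hn G"
begin

lemma G_comp: "f \<in> G \<Longrightarrow> g \<in> G \<Longrightarrow> f \<circ> g \<in> G"
  and G_inv: "f \<in> G \<Longrightarrow> inv f \<in> G"
  using subgroup unfolding subgroup_Hn_def by auto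

lemma G_hom:
  assumes "f \<in> G"
  obtains l b where "l \<noteq> 0" "f = cplx_homothety l b"
  using assms subgroup unfolding subgroup_Hn_def Hn_def by blast

lemma G_ratio_nonzero:
  assumes "cplx_homothety l b \<in> G"
  shows "l \<noteq> 0"
proof -
  obtain l' b' where "l' \<noteq> 0" "cplx_homothety l b = cplx_homothety l' b'"
    using G_hom[OF assms] by blast
  then show ?thesis using hom_inj by blast
qed

lemma ratio_in_Lambda: "cplx_homothety l b \<in> G \<Longrightarrow> l \<in> Lambda G"
  unfolding Lambda_def by (rule image_eqI[where x = "cplx_homothety l b"]) simp_all

lemma Lambda_elem:
  assumes "l \<in> Lambda G"
  obtains b where "cplx_homothety l b \<in> G"
proof -
  obtain f where f: "f \<in> G" "l = ratio f" using assms unfolding Lambda_def by blast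
  moreover obtain l' b where "f = cplx_homothety l' b" using G_hom[OF f(1)] by blast
  ultimately show ?thesis using that by simp
qed

lemma orbit_decomp: "g \<in> G \<Longrightarrow> g z = c + ratio g *s (z - c) + (g c - c)"
  by (erule G_hom) (simp add: vec_eq_iff algebra_simps)

lemma orbit_mem: "g \<in> G \<Longrightarrow> g z \<in> orbit G z"
  unfolding orbit_def by blast

lemma orbit_mono:
  assumes g: "g \<in> G"
  shows "orbit G (g z) \<subseteq> orbit G z"
proof
  fix y assume "y \<in> orbit G (g z)"
  then obtain f where "f \<in> G" "y = f (g z)" unfolding orbit_def by blast
  then show "y \<in> orbit G z" using orbit_mem[OF G_comp[OF \<open>f \<in> G\<close> g]] by simp
qed

lemma Gamma_iff: "a \<in> Gamma G \<longleftrightarrow> (\<exists>l. l \<noteq> 1 \<and> cplx_homothety l ((1 - l) *s a) \<in> G)"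
proof
  assume "a \<in> Gamma G"
  then obtain f where f: "f \<in> G" "f \<notin> Tn" "a = center f" unfolding Gamma_def by blast
  obtain l b where fb: "f = cplx_homothety l b" using G_hom[OF f(1)] by blast
  have l: "l \<noteq> 1" using f(2) fb by (simp add: Tn_hom)
  have f_centered: "f = cplx_homothety l ((1 - l) *s ((1 / (1 - l)) *s b))"
    by (rule trans[OF fb hom_centered_form[OF l]])
  have "center f = (1 / (1 - l)) *s b" unfolding f_centered by (rule center_hom_centered[OF l])
  then have "f = cplx_homothety l ((1 - l) *s a)" using f_centered f(3) by simp
  then show "\<exists>l. l \<noteq> 1 \<and> cplx_homothety l ((1 - l) *s a) \<in> G" using f(1) l by blast
next
  assume "\<exists>l. l \<noteq> 1 \<and> cplx_homothety l ((1 - l) *s a) \<in> G"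
  then obtain l where l: "l \<noteq> 1" and "cplx_homothety l ((1 - l) *s a) \<in> G - Tn"
    by (auto simp: Tn_hom)
  moreover have "a = center (cplx_homothety l ((1 - l) *s a))"
    by (rule center_hom_centered[OF l, symmetric])
  ultimately show "a \<in> Gamma G" unfolding Gamma_def by blast
qed

lemma Gamma_intro:
  assumes "cplx_homothety l b \<in> G" "l \<noteq> 1"
  shows "(1 / (1 - l)) *s b \<in> Gamma G"
proof -
  have "cplx_homothety l ((1 - l) *s ((1 / (1 - l)) *s b)) \<in> G"
    by (subst hom_centered_form[OF assms(2), symmetric]) (rule assms(1))
  then show ?thesis unfolding Gamma_iff using assms(2) by blast
qed

lemma transl_add:
  assumes "b \<in> transl_part G" "c \<in> transl_part G"
  shows "b + c \<in> transl_part G"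
proof -
  have "cplx_homothety 1 c \<circ> cplx_homothety 1 b \<in> G"
    using assms G_comp unfolding transl_part_def by blast
  then show ?thesis by (simp only: hom_comp transl_part_def mem_Collect_eq mult_1 vector_smult_lid)
qed

lemma transl_neg:
  assumes "b \<in> transl_part G"
  shows "- b \<in> transl_part G"
proof -
  have "inv (cplx_homothety 1 b) \<in> G" using assms G_inv unfolding transl_part_def by blast
  then show ?thesis by (simp only: inv_hom[OF one_neq_zero] inverse_1 vector_smult_lid
      transl_part_def mem_Collect_eq)
qed

text \<open>Conjugating the translation by t with a homothety of ratio l gives translation by l t.\<close>
lemma transl_conj:
  assumes "cplx_homothety l p \<in> G" "t \<in> transl_part G"
  shows "l *s t \<in> transl_part G"
proof -
  have "(cplx_homothety l p \<circ> cplx_homothety 1 t) \<circ> inv (cplx_homothety l p) \<in> G"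
    using assms G_comp G_inv unfolding transl_part_def by blast
  also have "(cplx_homothety l p \<circ> cplx_homothety 1 t) \<circ> inv (cplx_homothety l p)
      = cplx_homothety 1 (l *s t)"
    using G_ratio_nonzero[OF assms(1)] by (simp add: inv_hom hom_comp vec_eq_iff field_simps)
  finally show ?thesis by (simp only: transl_part_def mem_Collect_eq)
qed

lemma orbit_transl:
  assumes "t \<in> transl_part G"
  shows "z + t \<in> orbit G z"
proof -
  have "cplx_homothety 1 t z \<in> orbit G z" using assms unfolding transl_part_def by (blast intro: orbit_mem)
  then show ?thesis by (simp add: add.commute)
qed

text \<open>The commutator of homotheties centred at a and b is the translation by a nonzero
  multiple of b - a.\<close>
lemma commutator_transl:
  assumes f: "cplx_homothety l ((1 - l) *s a) \<in> G" and g: "cplx_homothety m ((1 - m) *s b) \<in> G"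
  shows "((l - 1) * (1 - m)) *s (b - a) \<in> transl_part G"
proof -
  let ?f = "cplx_homothety l ((1 - l) *s a)" and ?g = "cplx_homothety m ((1 - m) *s b)"
  have "(?f \<circ> ?g) \<circ> inv (?g \<circ> ?f) \<in> G" using f g G_comp G_inv by blast
  also have "(?f \<circ> ?g) \<circ> inv (?g \<circ> ?f) = cplx_homothety 1 (((l - 1) * (1 - m)) *s (b - a))"
    using G_ratio_nonzero[OF f] G_ratio_nonzero[OF g]
    by (simp add: inv_hom hom_comp vec_eq_iff field_simps)
  finally show ?thesis by (simp only: transl_part_def mem_Collect_eq)
qed

lemma closure_transl_add:
  "x \<in> closure (transl_part G) \<Longrightarrow> y \<in> closure (transl_part G) \<Longrightarrow> x + y \<in> closure (transl_part G)"
  by (rule closure_add_closed[OF transl_add])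

lemma closure_transl_neg: "x \<in> closure (transl_part G) \<Longrightarrow> - x \<in> closure (transl_part G)"
  by (rule closure_map_closed[OF continuous_on_minus[OF continuous_on_id] transl_neg])

lemma closure_transl_scale_Lambda:
  assumes "l \<in> Lambda G" "x \<in> closure (transl_part G)"
  shows "l *s x \<in> closure (transl_part G)"
proof -
  obtain p where p: "cplx_homothety l p \<in> G" using Lambda_elem[OF assms(1)] .
  show ?thesis by (rule closure_map_closed[OF continuous_smult_vec _ assms(2)]) (rule transl_conj[OF p])
qed

end

locale Hn_subgroup_generic = Hn_subgroup G for G :: "(complex^'n \<Rightarrow> complex^'n) set" +
  assumes nonabelian: "\<exists>f\<in>G. \<exists>g\<in>G. f \<circ> g \<noteq> g \<circ> f"
    and nonreal_ratio: "\<not> Lambda G \<subseteq> \<real>"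
    and not_SR: "\<not> G \<subseteq> SRn"
begin

text \<open>Translations commute, so a non-abelian G contains a proper homothety.\<close>
lemma Gamma_nonempty:
  obtains c where "c \<in> Gamma G"
proof -
  obtain f g where fg: "f \<in> G" "g \<in> G" "f \<circ> g \<noteq> g \<circ> f" using nonabelian by blast
  obtain l1 b1 where f: "f = cplx_homothety l1 b1" using G_hom[OF fg(1)] by blast
  obtain l2 b2 where g: "g = cplx_homothety l2 b2" using G_hom[OF fg(2)] by blast
  have "l1 \<noteq> 1 \<or> l2 \<noteq> 1"
  proof (rule ccontr)
    assume "\<not> (l1 \<noteq> 1 \<or> l2 \<noteq> 1)"
    then have "f \<circ> g = g \<circ> f" unfolding f g by (simp add: hom_comp add.commute)
    then show False using fg(3) by simp
  qed
  then show ?thesis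
  proof
    assume "l1 \<noteq> 1"
    then show ?thesis using Gamma_intro fg(1) that unfolding f by blast
  next
    assume "l2 \<noteq> 1"
    then show ?thesis using Gamma_intro fg(2) that unfolding g by blast
  qed
qed

text \<open>The closure of the translation part is a complex subspace: its multiplier ring is a
  closed subring of C containing a non-real ratio and a ratio outside F2 \<union> F3.\<close>
lemma closure_transl_smult:
  assumes "x \<in> closure (transl_part G)"
  shows "a *s x \<in> closure (transl_part G)"
proof -
  define M where "M = {\<mu>. \<forall>x\<in>closure (transl_part G). \<mu> *s x \<in> closure (transl_part G)}"
  have ring: "complex_subring M" "closed M"
    unfolding M_def by (rule multiplier_ring; simp add: closure_transl_add closure_transl_neg)+
  have Lambda_M: "Lambda G \<subseteq> M" unfolding M_def using closure_transl_scale_Lambda by blast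
  obtain f where f: "f \<in> G" "f \<notin> SRn" using not_SR by blast
  obtain l b where lb: "l \<noteq> 0" "f = cplx_homothety l b" using G_hom[OF f(1)] .
  have lF: "l \<notin> F2" "l \<notin> F3" using f(2) lb unfolding SRn_def S2Rn_def S3Rn_def by blast+
  have "inv f \<in> G" using G_inv[OF f(1)] .
  then have "l \<in> M" "inverse l \<in> M"
    using f(1) lb Lambda_M ratio_in_Lambda by (auto simp: inv_hom)
  moreover obtain \<mu> where "\<mu> \<in> Lambda G" "Im \<mu> \<noteq> 0"
    using nonreal_ratio complex_is_Real_iff by blast
  ultimately have "M = UNIV"
    using closed_subring_eq_UNIV[OF ring, of \<mu> l] Lambda_M lb(1) lF by blast
  then show ?thesis using assms unfolding M_def by blast
qed

lemma center_diff_in_closure: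
  assumes "a \<in> Gamma G" "b \<in> Gamma G"
  shows "b - a \<in> closure (transl_part G)"
proof -
  obtain l m where l: "l \<noteq> 1" "cplx_homothety l ((1 - l) *s a) \<in> G"
    and m: "m \<noteq> 1" "cplx_homothety m ((1 - m) *s b) \<in> G"
    using assms unfolding Gamma_iff by blast
  have "((l - 1) * (1 - m)) *s (b - a) \<in> closure (transl_part G)"
    using commutator_transl[OF l(2) m(2)] closure_subset by blast
  then have "(1 / ((l - 1) * (1 - m))) *s (((l - 1) * (1 - m)) *s (b - a)) \<in> closure (transl_part G)"
    by (rule closure_transl_smult)
  then show ?thesis using l(1) m(1) by (simp add: vector_smult_assoc)
qed

lemma E_G_minus_center:
  assumes c: "c \<in> Gamma G" and x: "x \<in> E_G G"
  shows "x - c \<in> closure (transl_part G)"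
proof -
  have "cplx_affine {x. x - c \<in> closure (transl_part G)}" unfolding cplx_affine_def
  proof (intro ballI allI, unfold mem_Collect_eq)
    fix x y t assume "x - c \<in> closure (transl_part G)" "y - c \<in> closure (transl_part G)"
    then have "(1 - t) *s (x - c) + t *s (y - c) \<in> closure (transl_part G)"
      by (intro closure_transl_add closure_transl_smult)
    moreover have "(1 - t) *s (x - c) + t *s (y - c) = (1 - t) *s x + t *s y - c"
      by (simp add: vec_eq_iff algebra_simps)
    ultimately show "(1 - t) *s x + t *s y - c \<in> closure (transl_part G)" by (simp only:)
  qed
  moreover have "Gamma G \<subseteq> {x. x - c \<in> closure (transl_part G)}"
    using center_diff_in_closure[OF c] by blast
  ultimately show ?thesis using x unfolding E_G_def by (blast dest: hull_minimal)
qed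

lemma Gamma_subset_E_G: "Gamma G \<subseteq> E_G G"
  unfolding E_G_def by (rule hull_subset)

lemma direction_subspace: "vec.subspace (affine_direction (E_G G))"
proof -
  obtain c where "c \<in> Gamma G" by (rule Gamma_nonempty)
  then have "c \<in> E_G G" using Gamma_subset_E_G by blast
  then show ?thesis unfolding E_G_def by (rule affine_direction_subspace[OF hull_affine])
qed

lemma direction_iff: "c \<in> E_G G \<Longrightarrow> v \<in> affine_direction (E_G G) \<longleftrightarrow> c + v \<in> E_G G"
  unfolding E_G_def by (rule affine_direction_iff[OF hull_affine])

text \<open>A translation t moves the centre of a homothety of ratio l by t / (1 - l).\<close>
lemma transl_subset_direction: "transl_part G \<subseteq> affine_direction (E_G G)"
proof
  fix t assume t: "t \<in> transl_part G"
  obtain c where c: "c \<in> Gamma G" by (rule Gamma_nonempty)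
  then obtain l where l: "l \<noteq> 1" "cplx_homothety l ((1 - l) *s c) \<in> G"
    unfolding Gamma_iff by blast
  define c' where "c' = c + (1 / (1 - l)) *s t"
  have "cplx_homothety 1 t \<circ> cplx_homothety l ((1 - l) *s c) \<in> G"
    using t l(2) G_comp unfolding transl_part_def by blast
  moreover have "cplx_homothety 1 t \<circ> cplx_homothety l ((1 - l) *s c) = cplx_homothety l ((1 - l) *s c')"
    using l(1) unfolding c'_def by (simp add: hom_comp vec_eq_iff field_simps)
  ultimately have "c' \<in> Gamma G" using l(1) unfolding Gamma_iff by auto
  then have "c' - c \<in> affine_direction (E_G G)"
    using c Gamma_subset_E_G unfolding affine_direction_def by blast
  then have "(1 - l) *s (c' - c) \<in> affine_direction (E_G G)"
    by (rule vec.subspace_scale[OF direction_subspace])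
  then show "t \<in> affine_direction (E_G G)" using l(1) unfolding c'_def by (simp add: vector_smult_assoc)
qed

lemma closure_transl_eq_direction: "closure (transl_part G) = affine_direction (E_G G)"
proof
  show "closure (transl_part G) \<subseteq> affine_direction (E_G G)"
    by (rule closure_minimal[OF transl_subset_direction vec_subspace_closed[OF direction_subspace]])
  obtain c where c: "c \<in> Gamma G" by (rule Gamma_nonempty)
  show "affine_direction (E_G G) \<subseteq> closure (transl_part G)"
  proof
    fix v assume "v \<in> affine_direction (E_G G)"
    then obtain x y where v: "v = (x - c) + - (y - c)" and "x \<in> E_G G" "y \<in> E_G G"
      unfolding affine_direction_def by auto
    then have "(x - c) + - (y - c) \<in> closure (transl_part G)"
      using E_G_minus_center[OF c] by (intro closure_transl_add closure_transl_neg)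
    then show "v \<in> closure (transl_part G)" using v by simp
  qed
qed

lemma displacement_in_direction:
  assumes c: "c \<in> E_G G" and g: "g \<in> G"
  shows "g c - c \<in> affine_direction (E_G G)"
proof -
  obtain l p where lp: "g = cplx_homothety l p" using G_hom[OF g] by blast
  show ?thesis
  proof (cases "l = 1")
    case True
    then have "p \<in> transl_part G" using g lp unfolding transl_part_def by simp
    then show ?thesis using transl_subset_direction lp True by auto
  next
    case False
    define a where "a = (1 / (1 - l)) *s p"
    have "a \<in> Gamma G" using Gamma_intro g False unfolding lp a_def by blast
    then have "c - a \<in> affine_direction (E_G G)"
      using c Gamma_subset_E_G unfolding affine_direction_def by blast
    then have "(l - 1) *s (c - a) \<in> affine_direction (E_G G)"
      by (rule vec.subspace_scale[OF direction_subspace])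
    moreover have "(l - 1) *s (c - a) = g c - c"
      using False unfolding lp a_def by (simp add: vec_eq_iff field_simps)
    ultimately show ?thesis by (simp only:)
  qed
qed

lemma translates_in_orbit_closure:
  assumes "v \<in> affine_direction (E_G G)"
  shows "z + v \<in> closure (orbit G z)"
proof -
  have "(\<lambda>t. z + t) ` transl_part G \<subseteq> closure (orbit G z)"
    using orbit_transl closure_subset by blast
  then have "(\<lambda>t. z + t) ` closure (transl_part G) \<subseteq> closure (orbit G z)"
    by (intro image_closure_subset continuous_on_add continuous_on_const continuous_on_id) simp_all
  then show ?thesis using assms closure_transl_eq_direction by blast
qed

lemma dense_if_E_G_full:
  assumes "E_G G = UNIV"
  shows "closure (orbit G z) = UNIV"
proof -
  have "y - z \<in> affine_direction (E_G G)" for y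
    using assms unfolding affine_direction_def by blast
  then have "z + (y - z) \<in> closure (orbit G z)" for y by (rule translates_in_orbit_closure)
  then show ?thesis by auto
qed


text \<open>Through c + l (z - c) + D, l \<in> Lambda_G, the closure
  of the orbit contains the closure of these parallel hyperplanes.\<close>
lemma dense_if_hyperplane:
  assumes dim: "vec.dim (affine_direction (E_G G)) = CARD('n) - 1"
    and Lambda_dense: "closure (Lambda G) = UNIV" and z: "z \<notin> E_G G"
  shows "closure (orbit G z) = UNIV"
proof -
  obtain c where "c \<in> Gamma G" by (rule Gamma_nonempty)
  then have c: "c \<in> E_G G" using Gamma_subset_E_G by blast
  define w where "w = z - c"
  have w: "w \<notin> affine_direction (E_G G)" using direction_iff[OF c, of w] z unfolding w_def by simp
  have line: "c + k *s w + v \<in> closure (orbit G z)" if v: "v \<in> affine_direction (E_G G)" for k v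
  proof -
    have "(\<lambda>k. c + k *s w + v) ` Lambda G \<subseteq> closure (orbit G z)"
    proof
      fix y assume "y \<in> (\<lambda>k. c + k *s w + v) ` Lambda G"
      then obtain l where l: "l \<in> Lambda G" "y = c + l *s w + v" by blast
      obtain b where g: "cplx_homothety l b \<in> G" using Lambda_elem[OF l(1)] .
      define g where "g = cplx_homothety l b"
      have d: "g c - c \<in> affine_direction (E_G G)"
        using displacement_in_direction[OF c g] unfolding g_def .
      have "y = g z + (v - (g c - c))"
        using orbit_decomp[OF g, of z c] unfolding l(2) g_def w_def by (simp add: algebra_simps)
      moreover have "v - (g c - c) \<in> affine_direction (E_G G)"
        using vec.subspace_diff[OF direction_subspace v d] .
      ultimately have "y \<in> closure (orbit G (g z))" using translates_in_orbit_closure by simp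
      then show "y \<in> closure (orbit G z)" using closure_mono[OF orbit_mono[OF g]] g_def by blast
    qed
    then have "(\<lambda>k. c + k *s w + v) ` closure (Lambda G) \<subseteq> closure (orbit G z)"
      by (intro image_closure_subset)
        (auto intro!: continuous_on_add continuous_on_const continuous_smult_vec_left)
    then show ?thesis using Lambda_dense by blast
  qed
  have span: "vec.span (insert w (affine_direction (E_G G))) = UNIV"
    using span_insert_eq_UNIV_iff[OF direction_subspace w] dim by blast
  have "y \<in> closure (orbit G z)" for y
  proof -
    have "y - c \<in> vec.span (insert w (affine_direction (E_G G)))" using span by simp
    then obtain k where "y - c - k *s w \<in> affine_direction (E_G G)"
      unfolding vec.span_insert vec.span_eq_iff[THEN iffD2, OF direction_subspace] by blast
    then have "c + k *s w + (y - c - k *s w) \<in> closure (orbit G z)" by (rule line)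
    then show ?thesis by simp
  qed
  then show ?thesis by auto
qed

text \<open>Conversely, a dense orbit with E_G \<noteq> UNIV forces E_G to be a hyperplane and Lambda_G
  to be dense: the orbit lies in c + span (z - c, D), and the functional which is 1 on
  z - c and 0 on D maps the orbit onto the ratios.\<close>
lemma dense_orbit_forces_hyperplane:
  assumes dense: "closure (orbit G z) = UNIV" and E: "E_G G \<noteq> UNIV"
  shows "vec.dim (affine_direction (E_G G)) = CARD('n) - 1 \<and> closure (Lambda G) = UNIV"
proof -
  obtain c where "c \<in> Gamma G" by (rule Gamma_nonempty)
  then have c: "c \<in> E_G G" using Gamma_subset_E_G by blast
  define w where "w = z - c"
  define S where "S = vec.span (insert w (affine_direction (E_G G)))"
  have orbit_S: "orbit G z \<subseteq> (\<lambda>y. y - c) -` S"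
  proof
    fix y assume "y \<in> orbit G z"
    then obtain g where g: "g \<in> G" "y = g z" unfolding orbit_def by blast
    have "y - c - ratio g *s w = g c - c"
      using orbit_decomp[OF g(1), of z c] g(2) unfolding w_def by (simp add: algebra_simps)
    then have "y - c - ratio g *s w \<in> vec.span (affine_direction (E_G G))"
      using vec.span_base[OF displacement_in_direction[OF c g(1)]] by (simp only:)
    then show "y \<in> (\<lambda>y. y - c) -` S" unfolding S_def vec.span_insert by blast
  qed
  have "closed ((\<lambda>y. y - c) -` S)"
    unfolding S_def by (intro continuous_closed_vimage vec_subspace_closed vec.subspace_span)
      (intro continuous_diff continuous_ident continuous_const)
  then have univ: "UNIV \<subseteq> (\<lambda>y. y - c) -` S" using closure_minimal[OF orbit_S] dense by simp
  have "x \<in> S" for x using subsetD[OF univ, of "c + x"] by simp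
  then have S: "S = UNIV" by auto
  have w: "w \<notin> affine_direction (E_G G)"
  proof
    assume "w \<in> affine_direction (E_G G)"
    then have "S = affine_direction (E_G G)"
      unfolding S_def using direction_subspace by (simp add: insert_absorb vec.span_eq_iff)
    then have "x - c \<in> affine_direction (E_G G)" for x using S by auto
    then have "c + (x - c) \<in> E_G G" for x using direction_iff[OF c] by blast
    then have "x \<in> E_G G" for x by simp
    then show False using E by auto
  qed
  have dim: "vec.dim (affine_direction (E_G G)) = CARD('n) - 1"
    using span_insert_eq_UNIV_iff[OF direction_subspace w] S unfolding S_def by blast
  obtain \<phi> :: "complex^'n \<Rightarrow> complex"
    where \<phi>: "continuous_on UNIV \<phi>" "\<forall>x\<in>affine_direction (E_G G). \<phi> x = 0" "\<phi> w = 1"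
      "\<forall>a x. \<phi> (a *s x) = a * \<phi> x" "\<forall>x y. \<phi> (x + y) = \<phi> x + \<phi> y"
    using sep_functional[OF direction_subspace w] by blast
  have onto_ratios: "(\<lambda>y. \<phi> (y - c)) ` orbit G z \<subseteq> Lambda G"
  proof
    fix a assume "a \<in> (\<lambda>y. \<phi> (y - c)) ` orbit G z"
    then obtain g where g: "g \<in> G" "a = \<phi> (g z - c)" unfolding orbit_def by blast
    have "g z - c = ratio g *s w + (g c - c)"
      using orbit_decomp[OF g(1), of z c] unfolding w_def by (simp add: algebra_simps)
    then have "a = \<phi> (ratio g *s w + (g c - c))" using g(2) by (simp only:)
    also have "\<dots> = ratio g * \<phi> w + \<phi> (g c - c)" using \<phi>(4,5) by simp
    also have "\<dots> = ratio g" using \<phi>(2,3) displacement_in_direction[OF c g(1)] by simp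
    finally have "a = ratio g" .
    then show "a \<in> Lambda G" unfolding Lambda_def using g(1) by blast
  qed
  have "continuous_on (closure (orbit G z)) (\<lambda>y. \<phi> (y - c))"
    by (rule continuous_on_compose2[OF \<phi>(1) continuous_on_diff[OF continuous_on_id continuous_on_const]])
      simp
  then have "(\<lambda>y. \<phi> (y - c)) ` closure (orbit G z) \<subseteq> closure (Lambda G)"
    by (rule image_closure_subset[OF _ closed_closure]) (use onto_ratios closure_subset in blast)
  then have "\<phi> ((c + m *s w) - c) \<in> closure (Lambda G)" for m using dense by blast
  then have "m \<in> closure (Lambda G)" for m using \<phi>(3,4) by simp
  then have "closure (Lambda G) = UNIV" by auto
  with dim show ?thesis ..
qed

end

theorem corollary1p4:
  fixes G :: "(complex ^ 'n \<Rightarrow> complex ^ 'n) set"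
  assumes "subgroup_Hn G"
    and "\<exists>f\<in>G. \<exists>g\<in>G. f \<circ> g \<noteq> g \<circ> f"
    and "\<not> Lambda G \<subseteq> \<real>"
    and "\<not> G \<subseteq> SRn"
  shows "((\<exists>z. closure (orbit G z) = UNIV)
           \<longleftrightarrow> (\<forall>z \<in> UNIV - E_G G. closure (orbit G z) = UNIV))
       \<and> ((\<forall>z \<in> UNIV - E_G G. closure (orbit G z) = UNIV)
           \<longleftrightarrow> (E_G G = UNIV \<or>
                (cplx_affine_dim (E_G G) = CARD('n) - 1 \<and> closure (Lambda G) = UNIV)))"
proof -
  interpret Hn_subgroup_generic G
    by (rule Hn_subgroup_generic.intro[OF Hn_subgroup.intro Hn_subgroup_generic_axioms.intro])
      (fact assms)+
  let ?hyperplane = "cplx_affine_dim (E_G G) = CARD('n) - 1 \<and> closure (Lambda G) = UNIV"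
  have condition1_to_3: "E_G G = UNIV \<or> ?hyperplane" if "closure (orbit G z) = UNIV" for z
    using dense_orbit_forces_hyperplane[OF that] unfolding cplx_affine_dim_direction by blast
  have condition3_to_2: "closure (orbit G z) = UNIV" if "E_G G = UNIV \<or> ?hyperplane" "z \<notin> E_G G" for z
    using that dense_if_E_G_full dense_if_hyperplane unfolding cplx_affine_dim_direction by blast
  have condition2_to_1: "\<exists>z. closure (orbit G z) = UNIV"
    if "\<forall>z \<in> UNIV - E_G G. closure (orbit G z) = UNIV"
  proof (cases "E_G G = UNIV")
    case True
    then show ?thesis using dense_if_E_G_full by blast
  next
    case False
    then obtain z where "z \<notin> E_G G" by auto
    then show ?thesis using that by blast
  qed
  show ?thesis using condition1_to_3 condition3_to_2 condition2_to_1 by blast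
qed

end
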